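(* Let $\mathcal{H}$ be a complex separable Hilbert space, $A\in\mathcal{B}(\mathcal{H})$, and $\mathcal{G}\subset\mathcal{H}$ a countable Bessel system. Assume the semigroup $\{e^{tA}\}_{t\ge0}$ is exponentially stable. Then the following are equivalent: (i) $\{e^{tA}g\}_{g\in\mathcal{G},\,t\in[0,\infty)}$ is a semi-continuous frame for $\mathcal{H}$. (ii) There exists $\delta>0$ such that for every uniformly separated countable set $T=\{t_j:j\in\mathbb{N}\}\subset[0,\infty)$ with $t_1=0$ and $0<t_{j+1}-t_j<\delta$ for all $j\in\mathbb{N}$, the system $\{e^{tA}g\}_{g\in\mathcal{G},\,t\in T}$ is a frame for $\mathcal{H}$. (iii) There exists $m>0$ such that, with $T=\{jm: j=0,1,2,\dots\}$, the system $\{e^{tA}g\}_{g\in\mathcal{G},\,t\in T}$ is a frame for $\mathcal{H}$.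
   Context: For $A\in\mathcal{B}(\mathcal{H})$, $e^{tA}:=\sum_{n\ge0}\frac{t^n}{n!}A^n$. The semigroup $\{e^{tA}\}_{t\ge0}$ is exponentially stable if there are constants $M\ge1$ and $\omega<0$ with $\|e^{tA}\|\le Me^{\omega t}$ for all $t\ge0$ (for bounded $A$ this is equivalent to $\mathrm{Re}\,\lambda<0$ for all $\lambda$ in the spectrum of $A$). A set $T\subset\mathbb{R}$ is uniformly separated if $\inf\{|t-t'|:t,t'\in T,\,t\ne t'\}>0$. A countable family $\{f_k\}\subset\mathcal{H}$ is a Bessel system if there is $C>0$ with $\sum_k|\langle f,f_k\rangle|^2\le C\|f\|^2$ for all $f\in\mathcal{H}$, and a frame if moreover there is $c>0$ with $c\|f\|^2\le\sum_k|\langle f,f_k\rangle|^2$ for all $f$. For a countable $\mathcal{G}\subset\mathcal{H}$ and an interval $\mathcal{T}\subset[0,\infty)$, $\{e^{tA}g\}_{g\in\mathcal{G},t\in\mathcal{T}}$ is a semi-continuous frame for $\mathcal{H}$ if there are constants $c,C>0$ such that $c\|f\|^2\le\sum_{g\in\mathcal{G}}\int_{\mathcal{T}}|\langle f,e^{tA}g\rangle|^2\,dt\le C\|f\|^2$ for all $f\in\mathcal{H}$. *)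

theory Defs
  imports "HOL-Analysis.Analysis"
begin

text \<open>A complex Hilbert space is modelled as a real Hilbert space (type class
  real_inner + complete_space) together with a complex structure J, which is the
  action of multiplication by the imaginary unit: J is real-linear, J (J x) = - x,
  and J preserves the real inner product.\<close>

definition complex_structure :: "('a::real_inner \<Rightarrow> 'a) \<Rightarrow> bool" where
  "complex_structure J \<longleftrightarrow> linear J \<and> (\<forall>x. J (J x) = - x) \<and>
     (\<forall>x y. inner (J x) (J y) = inner x y)"

definition cscale :: "('a::real_vector \<Rightarrow> 'a) \<Rightarrow> complex \<Rightarrow> 'a \<Rightarrow> 'a" where
  "cscale J c x = Re c *\<^sub>R x + Im c *\<^sub>R J x"

text \<open>The complex inner product (linear in the first argument) whose real part is the
  real inner product.\<close>
definition cinner :: "('a::real_inner \<Rightarrow> 'a) \<Rightarrow> 'a \<Rightarrow> 'a \<Rightarrow> complex" where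
  "cinner J x y = Complex (inner x y) (inner x (J y))"

definition bounded_clinear_op :: "('a::real_inner \<Rightarrow> 'a) \<Rightarrow> ('a \<Rightarrow> 'a) \<Rightarrow> bool" where
  "bounded_clinear_op J A \<longleftrightarrow> bounded_linear A \<and> (\<forall>c x. A (cscale J c x) = cscale J c (A x))"

definition separable_space :: "'a::metric_space itself \<Rightarrow> bool" where
  "separable_space _ \<longleftrightarrow> (\<exists>D::'a set. countable D \<and> closure D = UNIV)"

definition op_exp :: "real \<Rightarrow> ('a::real_normed_vector \<Rightarrow> 'a) \<Rightarrow> 'a \<Rightarrow> 'a" where
  "op_exp t A x = (\<Sum>n. (t ^ n / fact n) *\<^sub>R (A ^^ n) x)"

definition exp_stable :: "('a::real_normed_vector \<Rightarrow> 'a) \<Rightarrow> bool" where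
  "exp_stable A \<longleftrightarrow> (\<exists>M \<ge> 1. \<exists>\<omega> < 0. \<forall>t \<ge> 0. onorm (op_exp t A) \<le> M * exp (\<omega> * t))"

definition uniformly_separated :: "real set \<Rightarrow> bool" where
  "uniformly_separated T \<longleftrightarrow> (\<exists>\<epsilon>>0. \<forall>t\<in>T. \<forall>t'\<in>T. t \<noteq> t' \<longrightarrow> \<epsilon> \<le> \<bar>t - t'\<bar>)"

definition bessel_family :: "('a::real_inner \<Rightarrow> 'a) \<Rightarrow> ('i \<Rightarrow> 'a) \<Rightarrow> 'i set \<Rightarrow> bool" where
  "bessel_family J F I \<longleftrightarrow> (\<exists>C>0. \<forall>f. (\<lambda>k. (cmod (cinner J f (F k)))\<^sup>2) summable_on I \<and>
      (\<Sum>\<^sub>\<infinity>k\<in>I. (cmod (cinner J f (F k)))\<^sup>2) \<le> C * (norm f)\<^sup>2)"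

definition frame_family :: "('a::real_inner \<Rightarrow> 'a) \<Rightarrow> ('i \<Rightarrow> 'a) \<Rightarrow> 'i set \<Rightarrow> bool" where
  "frame_family J F I \<longleftrightarrow> (\<exists>c>0. \<exists>C>0. \<forall>f. (\<lambda>k. (cmod (cinner J f (F k)))\<^sup>2) summable_on I \<and>
      c * (norm f)\<^sup>2 \<le> (\<Sum>\<^sub>\<infinity>k\<in>I. (cmod (cinner J f (F k)))\<^sup>2) \<and>
      (\<Sum>\<^sub>\<infinity>k\<in>I. (cmod (cinner J f (F k)))\<^sup>2) \<le> C * (norm f)\<^sup>2)"

definition semicont_frame :: "('a::real_inner \<Rightarrow> 'a) \<Rightarrow> ('a \<Rightarrow> 'a) \<Rightarrow> 'a set \<Rightarrow> real set \<Rightarrow> bool" where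
  "semicont_frame J A G Tc \<longleftrightarrow> (\<exists>c>0. \<exists>C>0. \<forall>f.
      (\<forall>g\<in>G. set_integrable lborel Tc (\<lambda>t. (cmod (cinner J f (op_exp t A g)))\<^sup>2)) \<and>
      (\<lambda>g. LINT t:Tc|lborel. (cmod (cinner J f (op_exp t A g)))\<^sup>2) summable_on G \<and>
      c * (norm f)\<^sup>2 \<le> (\<Sum>\<^sub>\<infinity>g\<in>G. LINT t:Tc|lborel. (cmod (cinner J f (op_exp t A g)))\<^sup>2) \<and>
      (\<Sum>\<^sub>\<infinity>g\<in>G. LINT t:Tc|lborel. (cmod (cinner J f (op_exp t A g)))\<^sup>2) \<le> C * (norm f)\<^sup>2)"

end

theory Submission
  imports Defs
begin

text \<open>All three conditions are lower frame bounds for the orbit coefficients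
  |<f, e^{tA} g>|^2, integrated over t \<ge> 0 or sampled on a grid; the upper bounds are automatic,
  because the Bessel property of G and exponential stability give
  \<Sum>g |<f, e^{tA} g>|^2 \<le> 2 B M^2 e^{2\<omega>t} |f|^2, which is integrable and summable along grids of
  linearly growing points.

  To compare the integral with a sampled sum, write e^{sA} - e^{uA} = e^{uA} (e^{(s-u)A} - I), an
  operator of norm at most M e^{\<omega>u} (e^{|s-u|K} - 1).  The Bessel bound applied to it shows that
  within a grid cell the orbit sum changes by at most a factor 2 plus an error of order
  mesh^2 e^{2\<omega>u} |f|^2, and these errors have a bounded Riemann sum.  Hence the integral is at
  most 2 mesh times the sampled sum plus O(mesh^2) |f|^2, and conversely for uniform grids; for a
  small mesh the error is absorbed into the lower frame bound.  A coarse uniform grid is compared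
  with the finer grid obtained by subdividing each step into k pieces.\<close>

section \<open>Series in complete normed spaces\<close>

text \<open>The library states these for the class banach, of which a type of sort
  {real_normed_vector, complete_space} is not automatically an instance.\<close>

lemma summable_norm_cancel_complete:
  fixes f :: "nat \<Rightarrow> 'a::{real_normed_vector, complete_space}"
  assumes "summable (\<lambda>n. norm (f n))"
  shows "summable f"
  unfolding summable_iff_convergent
proof (rule Cauchy_convergent, rule CauchyI)
  fix e :: real
  assume "0 < e"
  then obtain N where N: "\<And>m n. m \<ge> N \<Longrightarrow> norm (\<Sum>i=m..<n. norm (f i)) < e"
    using assms unfolding summable_Cauchy by blast
  have *: "norm ((\<Sum>i<n. f i) - (\<Sum>i<m. f i)) < e" if "N \<le> m" "m \<le> n" for m n
  proof -
    have "norm ((\<Sum>i<n. f i) - (\<Sum>i<m. f i)) = norm (\<Sum>i=m..<n. f i)"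
      using that sum_diff_nat_ivl[of 0 m n f] by (simp add: atLeast0LessThan)
    also have "\<dots> \<le> norm (\<Sum>i=m..<n. norm (f i))"
      by (rule order_trans[OF norm_sum]) simp
    finally show ?thesis using N[OF \<open>N \<le> m\<close>, of n] by linarith
  qed
  show "\<exists>M. \<forall>m\<ge>M. \<forall>n\<ge>M. norm ((\<Sum>i<m. f i) - (\<Sum>i<n. f i)) < e"
    by (metis * norm_minus_commute linorder_le_cases order_trans)
qed

lemma summable_norm_complete:
  fixes f :: "nat \<Rightarrow> 'a::{real_normed_vector, complete_space}"
  assumes "summable (\<lambda>n. norm (f n))"
  shows "norm (suminf f) \<le> (\<Sum>n. norm (f n))"
  by (rule LIMSEQ_le[OF tendsto_norm[OF summable_LIMSEQ[OF summable_norm_cancel_complete[OF assms]]]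
        summable_LIMSEQ[OF assms]]) (auto intro: norm_sum)

lemma exp_power_series_sums: "(\<lambda>n. r ^ n / fact n) sums exp (r::real)"
  using exp_converges[of r] by (simp add: divide_inverse ac_simps)

lemma bounded_linear_funpow:
  fixes A :: "'a::real_normed_vector \<Rightarrow> 'a"
  assumes "bounded_linear A"
  shows "bounded_linear (A ^^ n)"
proof (induction n)
  case (Suc n)
  then show ?case
    using bounded_linear_compose[OF assms Suc] by (simp add: o_def)
qed (simp add: id_def bounded_linear_ident)

text \<open>The difference between square and triangular partial sums is dominated by the same
  difference for the real Cauchy product of \<alpha> and \<beta>, which tends to zero.\<close>

lemma diagonal_sums_of_square_limit:
  fixes c :: "nat \<Rightarrow> nat \<Rightarrow> 'a::real_normed_vector"
  assumes bound: "\<And>i j. norm (c i j) \<le> \<alpha> i * \<beta> j"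
    and \<alpha>: "\<And>i. 0 \<le> \<alpha> i" "summable \<alpha>" and \<beta>: "\<And>j. 0 \<le> \<beta> j" "summable \<beta>"
    and square: "(\<lambda>n. \<Sum>i<n. \<Sum>j<n. c i j) \<longlonglongrightarrow> L"
  shows "(\<lambda>k. \<Sum>i\<le>k. c i (k - i)) sums L"
proof -
  define Sq where "Sq n = {..<n} \<times> {..<n}" for n :: nat
  define Tr where "Tr n = {(i, j). i + j < n}" for n :: nat
  have Tr_Sq: "Tr n \<subseteq> Sq n" and fin: "finite (Sq n)" for n
    by (auto simp: Tr_def Sq_def)
  note sum_Sq = Sq_def sum.cartesian_product
  note sum_Tr = sum.triangle_reindex[folded Tr_def]
  have "(\<lambda>n. (\<Sum>i<n. \<alpha> i) * (\<Sum>j<n. \<beta> j)) \<longlonglongrightarrow> suminf \<alpha> * suminf \<beta>"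
    by (intro tendsto_mult summable_LIMSEQ \<alpha> \<beta>)
  then have lim_Sq: "(\<lambda>n. \<Sum>(i, j)\<in>Sq n. \<alpha> i * \<beta> j) \<longlonglongrightarrow> suminf \<alpha> * suminf \<beta>"
    by (simp add: sum_Sq sum_product)
  have "(\<lambda>k. \<Sum>i\<le>k. \<alpha> i * \<beta> (k - i)) sums (suminf \<alpha> * suminf \<beta>)"
    using Cauchy_product_sums[of \<alpha> \<beta>] \<alpha> \<beta> by simp
  then have lim_Tr: "(\<lambda>n. \<Sum>(i, j)\<in>Tr n. \<alpha> i * \<beta> j) \<longlonglongrightarrow> suminf \<alpha> * suminf \<beta>"
    by (simp add: sums_def sum_Tr)
  have dominated: "norm ((\<Sum>(i, j)\<in>Sq n. c i j) - (\<Sum>(i, j)\<in>Tr n. c i j))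
      \<le> (\<Sum>(i, j)\<in>Sq n. \<alpha> i * \<beta> j) - (\<Sum>(i, j)\<in>Tr n. \<alpha> i * \<beta> j)" for n
  proof -
    have "norm ((\<Sum>(i, j)\<in>Sq n. c i j) - (\<Sum>(i, j)\<in>Tr n. c i j)) = norm (\<Sum>(i, j)\<in>Sq n - Tr n. c i j)"
      by (simp add: sum_diff[OF fin Tr_Sq])
    also have "\<dots> \<le> (\<Sum>(i, j)\<in>Sq n - Tr n. \<alpha> i * \<beta> j)"
      by (rule order_trans[OF norm_sum sum_mono]) (auto simp: bound)
    finally show ?thesis
      by (simp add: sum_diff[OF fin Tr_Sq])
  qed
  have "(\<lambda>n. (\<Sum>(i, j)\<in>Sq n. \<alpha> i * \<beta> j) - (\<Sum>(i, j)\<in>Tr n. \<alpha> i * \<beta> j)) \<longlonglongrightarrow> 0"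
    using tendsto_diff[OF lim_Sq lim_Tr] by simp
  then have "(\<lambda>n. (\<Sum>(i, j)\<in>Sq n. c i j) - (\<Sum>(i, j)\<in>Tr n. c i j)) \<longlonglongrightarrow> 0"
    by (rule Lim_null_comparison[rotated]) (use dominated in auto)
  moreover have "(\<lambda>n. \<Sum>(i, j)\<in>Sq n. c i j) \<longlonglongrightarrow> L"
    using square by (simp add: sum_Sq)
  ultimately have "(\<lambda>n. \<Sum>(i, j)\<in>Tr n. c i j) \<longlonglongrightarrow> L"
    by (rule Lim_transform2[rotated])
  then show ?thesis
    by (simp add: sums_def sum_Tr)
qed

section \<open>The exponential of a bounded operator\<close>

locale bounded_operator_exp =
  fixes A :: "'a::{real_normed_vector, complete_space} \<Rightarrow> 'a" and K :: real
  assumes bounded_linear_A: "bounded_linear A"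
    and norm_A_le: "\<And>x. norm (A x) \<le> K * norm x"
    and K_pos: "0 < K"
begin

abbreviation E :: "real \<Rightarrow> 'a \<Rightarrow> 'a" where
  "E t \<equiv> op_exp t A"

lemma linear_funpow: "linear (A ^^ n)"
  using bounded_linear_funpow[OF bounded_linear_A] bounded_linear.linear by blast

lemma norm_funpow_le: "norm ((A ^^ n) x) \<le> K ^ n * norm x"
proof (induction n)
  case (Suc n)
  have "norm ((A ^^ Suc n) x) \<le> K * norm ((A ^^ n) x)"
    by (simp add: norm_A_le)
  also have "\<dots> \<le> K * (K ^ n * norm x)"
    using Suc K_pos by (simp add: mult_left_mono)
  finally show ?case by simp
qed simp

lemma norm_exp_term_le:
  "norm ((t ^ n / fact n) *\<^sub>R (A ^^ n) x) \<le> (\<bar>t\<bar> * K) ^ n / fact n * norm x"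
proof -
  have "norm ((t ^ n / fact n) *\<^sub>R (A ^^ n) x) = \<bar>t\<bar> ^ n / fact n * norm ((A ^^ n) x)"
    by (simp add: power_abs)
  also have "\<dots> \<le> \<bar>t\<bar> ^ n / fact n * (K ^ n * norm x)"
    by (intro mult_left_mono norm_funpow_le) auto
  finally show ?thesis by (simp add: power_mult_distrib)
qed

lemma summable_exp_bound: "summable (\<lambda>n. (\<bar>t\<bar> * K) ^ n / fact n * norm x)"
  by (rule summable_mult2[OF sums_summable[OF exp_power_series_sums]])

lemma summable_norm_exp_term: "summable (\<lambda>n. norm ((t ^ n / fact n) *\<^sub>R (A ^^ n) x))"
  by (rule summable_comparison_test[OF _ summable_exp_bound]) (use norm_exp_term_le in auto)

lemma summable_exp_term: "summable (\<lambda>n. (t ^ n / fact n) *\<^sub>R (A ^^ n) x)"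
  by (rule summable_norm_cancel_complete[OF summable_norm_exp_term])

lemma norm_op_exp_le: "norm (E t x) \<le> exp (\<bar>t\<bar> * K) * norm x"
proof -
  have "norm (E t x) \<le> (\<Sum>n. norm ((t ^ n / fact n) *\<^sub>R (A ^^ n) x))"
    unfolding op_exp_def by (rule summable_norm_complete[OF summable_norm_exp_term])
  also have "\<dots> \<le> (\<Sum>n. (\<bar>t\<bar> * K) ^ n / fact n * norm x)"
    by (rule suminf_le[OF norm_exp_term_le summable_norm_exp_term summable_exp_bound])
  also have "\<dots> = exp (\<bar>t\<bar> * K) * norm x"
    using sums_unique[OF sums_mult2[OF exp_power_series_sums]] by simp
  finally show ?thesis .
qed

lemma bounded_linear_op_exp: "bounded_linear (E t)"
proof (rule bounded_linear_intro[of _ "exp (\<bar>t\<bar> * K)"])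
  fix x y :: 'a and c :: real
  show "E t (x + y) = E t x + E t y"
    unfolding op_exp_def
    by (simp add: linear_add[OF linear_funpow] scaleR_add_right suminf_add[OF summable_exp_term summable_exp_term])
  have "c *\<^sub>R E t x = (\<Sum>n. c *\<^sub>R ((t ^ n / fact n) *\<^sub>R (A ^^ n) x))"
    unfolding op_exp_def by (rule suminf_scaleR_right[OF summable_exp_term])
  then show "E t (c *\<^sub>R x) = c *\<^sub>R E t x"
    by (simp add: op_exp_def linear_scale[OF linear_funpow] mult.commute)
  show "norm (E t x) \<le> norm x * exp (\<bar>t\<bar> * K)"
    using norm_op_exp_le by (simp add: mult.commute)
qed

lemma linear_op_exp: "linear (E t)"
  using bounded_linear_op_exp bounded_linear.linear by blast

lemma norm_op_exp_minus_le: "norm (E t x - x) \<le> (exp (\<bar>t\<bar> * K) - 1) * norm x"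
proof -
  let ?f = "\<lambda>n. (t ^ n / fact n) *\<^sub>R (A ^^ n) x"
  let ?g = "\<lambda>n. (\<bar>t\<bar> * K) ^ n / fact n * norm x"
  have "E t x - x = (\<Sum>n. ?f (Suc n))"
    unfolding op_exp_def using suminf_split_head[OF summable_exp_term[of t x]] by simp
  also have "norm \<dots> \<le> (\<Sum>n. norm (?f (Suc n)))"
    by (rule summable_norm_complete[OF summable_Suc_iff[THEN iffD2, OF summable_norm_exp_term]])
  also have "\<dots> \<le> (\<Sum>n. ?g (Suc n))"
    by (rule suminf_le[OF norm_exp_term_le summable_Suc_iff[THEN iffD2, OF summable_norm_exp_term]
          summable_Suc_iff[THEN iffD2, OF summable_exp_bound]])
  also have "\<dots> = (\<Sum>n. ?g n) - ?g 0"
    by (rule suminf_split_head[OF summable_exp_bound])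
  also have "(\<Sum>n. ?g n) = exp (\<bar>t\<bar> * K) * norm x"
    using sums_unique[OF sums_mult2[OF exp_power_series_sums]] by simp
  finally show ?thesis by (simp add: algebra_simps)
qed

lemma op_exp_add: "E s (E t x) = E (s + t) x"
proof -
  define a where "a i = s ^ i / fact i" for i
  define b where "b j = (t ^ j / fact j) *\<^sub>R (A ^^ j) x" for j
  define c where "c i j = a i *\<^sub>R (A ^^ i) (b j)" for i j
  define \<alpha> where "\<alpha> i = (\<bar>s\<bar> * K) ^ i / fact i" for i
  define \<beta> where "\<beta> j = (\<bar>t\<bar> * K) ^ j / fact j * norm x" for j
  have \<alpha>_sums: "\<alpha> sums exp (\<bar>s\<bar> * K)"
    unfolding \<alpha>_def by (rule exp_power_series_sums)
  have bound: "norm (c i j) \<le> \<alpha> i * \<beta> j" for i j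
  proof -
    have "norm (c i j) \<le> \<alpha> i * norm (b j)"
      using norm_exp_term_le[of s i "b j"] by (simp add: c_def a_def \<alpha>_def)
    also have "\<dots> \<le> \<alpha> i * \<beta> j"
      using norm_exp_term_le[of t j x] K_pos by (intro mult_left_mono) (auto simp: b_def \<beta>_def \<alpha>_def)
    finally show ?thesis .
  qed
  define y where "y n = (\<Sum>j<n. b j)" for n
  have y_lim: "y \<longlonglongrightarrow> E t x"
    unfolding y_def b_def op_exp_def by (rule summable_LIMSEQ[OF summable_exp_term])
  have square: "(\<Sum>i<n. \<Sum>j<n. c i j)
      = (\<Sum>i<n. a i *\<^sub>R (A ^^ i) (E t x)) + (\<Sum>i<n. a i *\<^sub>R (A ^^ i) (y n - E t x))" for n
    by (simp add: c_def y_def scaleR_sum_right linear_sum[OF linear_funpow] linear_diff[OF linear_funpow]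
        sum.distrib[symmetric] algebra_simps)
  have "(\<lambda>n. \<Sum>i<n. a i *\<^sub>R (A ^^ i) (E t x)) \<longlonglongrightarrow> E s (E t x)"
    unfolding a_def op_exp_def[of s] by (rule summable_LIMSEQ[OF summable_exp_term])
  moreover have "(\<lambda>n. \<Sum>i<n. a i *\<^sub>R (A ^^ i) (y n - E t x)) \<longlonglongrightarrow> 0"
  proof (rule Lim_null_comparison)
    show "\<forall>\<^sub>F n in sequentially. norm (\<Sum>i<n. a i *\<^sub>R (A ^^ i) (y n - E t x))
        \<le> exp (\<bar>s\<bar> * K) * norm (y n - E t x)"
    proof (intro always_eventually allI)
      fix n
      have "norm (\<Sum>i<n. a i *\<^sub>R (A ^^ i) (y n - E t x)) \<le> (\<Sum>i<n. \<alpha> i * norm (y n - E t x))"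
        by (rule order_trans[OF norm_sum sum_mono]) (use norm_exp_term_le in \<open>simp add: a_def \<alpha>_def\<close>)
      also have "\<dots> \<le> exp (\<bar>s\<bar> * K) * norm (y n - E t x)"
        unfolding sum_distrib_right[symmetric] using K_pos
        by (intro mult_right_mono sum_le_suminf[OF sums_summable[OF \<alpha>_sums], of "{..<n}", 
            unfolded sums_unique[OF \<alpha>_sums, symmetric]]) (auto simp: \<alpha>_def)
      finally show "norm (\<Sum>i<n. a i *\<^sub>R (A ^^ i) (y n - E t x)) \<le> exp (\<bar>s\<bar> * K) * norm (y n - E t x)" .
    qed
    show "(\<lambda>n. exp (\<bar>s\<bar> * K) * norm (y n - E t x)) \<longlonglongrightarrow> 0"
      using tendsto_mult_right_zero[OF tendsto_norm_zero[OF LIM_zero[OF y_lim]]] by simp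
  qed
  ultimately have square_lim: "(\<lambda>n. \<Sum>i<n. \<Sum>j<n. c i j) \<longlonglongrightarrow> E s (E t x)"
    unfolding square using tendsto_add by fastforce
  have "summable \<beta>"
    unfolding \<beta>_def by (rule summable_exp_bound)
  moreover have "0 \<le> \<alpha> i" "0 \<le> \<beta> j" for i j
    using K_pos by (auto simp: \<alpha>_def \<beta>_def)
  ultimately have diagonal: "(\<lambda>k. \<Sum>i\<le>k. c i (k - i)) sums E s (E t x)"
    by (intro diagonal_sums_of_square_limit[OF bound _ sums_summable[OF \<alpha>_sums] _ _ square_lim])
  have "(\<Sum>i\<le>k. c i (k - i)) = ((s + t) ^ k / fact k) *\<^sub>R (A ^^ k) x" for k
  proof -
    have "(\<Sum>i\<le>k. c i (k - i)) = (\<Sum>i\<le>k. s ^ i / fact i * (t ^ (k - i) / fact (k - i))) *\<^sub>R (A ^^ k) x"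
      unfolding scaleR_sum_left
    proof (rule sum.cong[OF refl])
      fix i assume "i \<in> {..k}"
      then have "(A ^^ i) ((A ^^ (k - i)) x) = (A ^^ k) x"
        by (metis atMost_iff comp_apply funpow_add le_add_diff_inverse)
      then show "c i (k - i) = (s ^ i / fact i * (t ^ (k - i) / fact (k - i))) *\<^sub>R (A ^^ k) x"
        by (simp add: c_def a_def b_def linear_scale[OF linear_funpow])
    qed
    also have "(\<Sum>i\<le>k. s ^ i / fact i * (t ^ (k - i) / fact (k - i))) = (s + t) ^ k / fact k"
      using exp_series_add_commuting[of s t k] by (simp add: divide_inverse ac_simps)
    finally show ?thesis .
  qed
  with diagonal show ?thesis
    by (simp add: op_exp_def sums_iff)
qed

lemma norm_op_exp_diff_le:
  "norm (E t y - E u y) \<le> exp (\<bar>u\<bar> * K) * ((exp (\<bar>t - u\<bar> * K) - 1) * norm y)"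
proof -
  have "E t y - E u y = E u (E (t - u) y - y)"
    using op_exp_add[of u "t - u" y] linear_diff[OF linear_op_exp[of u]] by simp
  also have "norm \<dots> \<le> exp (\<bar>u\<bar> * K) * ((exp (\<bar>t - u\<bar> * K) - 1) * norm y)"
    by (rule order_trans[OF norm_op_exp_le mult_left_mono[OF norm_op_exp_minus_le]]) simp
  finally show ?thesis .
qed

lemma continuous_on_op_exp: "continuous_on UNIV (\<lambda>t. E t y)"
proof (intro continuous_at_imp_continuous_on ballI)
  fix u :: real
  have "((\<lambda>t. exp (\<bar>u\<bar> * K) * ((exp (\<bar>t - u\<bar> * K) - 1) * norm y)) \<longlongrightarrow>
      exp (\<bar>u\<bar> * K) * ((exp (\<bar>u - u\<bar> * K) - 1) * norm y)) (at u)"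
    by (intro tendsto_intros)
  then have "((\<lambda>t. exp (\<bar>u\<bar> * K) * ((exp (\<bar>t - u\<bar> * K) - 1) * norm y)) \<longlongrightarrow> 0) (at u)"
    by simp
  then have "((\<lambda>t. E t y - E u y) \<longlongrightarrow> 0) (at u)"
    by (rule Lim_null_comparison[OF always_eventually, OF allI, OF norm_op_exp_diff_le])
  then show "isCont (\<lambda>t. E t y) u"
    unfolding isCont_def by (simp add: LIM_zero_iff)
qed

end

section \<open>Bessel bounds under bounded operators\<close>

lemma le_of_square_le_mult:
  fixes x a :: real
  assumes "x * x \<le> a * x" "0 \<le> x" "0 \<le> a"
  shows "x \<le> a"
  using assms by (cases "x = 0") (auto simp: mult_le_cancel_right)

lemma synthesis_norm_le:
  fixes F :: "'a::real_inner set"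
  assumes "finite F" "0 \<le> B"
    and bessel: "\<And>h. (\<Sum>g\<in>F. (inner h g)\<^sup>2) \<le> B * (norm h)\<^sup>2"
  shows "(norm (\<Sum>g\<in>F. c g *\<^sub>R g))\<^sup>2 \<le> B * (\<Sum>g\<in>F. (c g)\<^sup>2)"
proof -
  define h where "h = (\<Sum>g\<in>F. c g *\<^sub>R g)"
  have "(norm h)\<^sup>2 = (\<Sum>g\<in>F. c g * inner h g)"
    unfolding power2_norm_eq_inner by (subst (2) h_def) (simp add: inner_sum_right)
  then have "(norm h)\<^sup>2 * (norm h)\<^sup>2 \<le> (\<Sum>g\<in>F. (c g)\<^sup>2) * (\<Sum>g\<in>F. (inner h g)\<^sup>2)"
    using Cauchy_Schwarz_ineq_sum[of c "inner h" F] by (simp add: power2_eq_square)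
  also have "\<dots> \<le> (B * (\<Sum>g\<in>F. (c g)\<^sup>2)) * (norm h)\<^sup>2"
    using mult_left_mono[OF bessel[of h], of "\<Sum>g\<in>F. (c g)\<^sup>2"] by (simp add: sum_nonneg ac_simps)
  finally show ?thesis
    unfolding h_def[symmetric] by (rule le_of_square_le_mult) (use \<open>0 \<le> B\<close> in \<open>simp_all add: sum_nonneg\<close>)
qed

text \<open>A duality argument through the synthesis bound; it avoids the adjoint of X.\<close>

lemma bessel_image_real:
  fixes F :: "'a::real_inner set"
  assumes "finite F" "0 \<le> B"
    and bessel: "\<And>h. (\<Sum>g\<in>F. (inner h g)\<^sup>2) \<le> B * (norm h)\<^sup>2"
    and X: "linear X" "\<And>x. norm (X x) \<le> L * norm x"
  shows "(\<Sum>g\<in>F. (inner f (X g))\<^sup>2) \<le> B * L\<^sup>2 * (norm f)\<^sup>2"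
proof -
  define S where "S = (\<Sum>g\<in>F. (inner f (X g))\<^sup>2)"
  define h where "h = (\<Sum>g\<in>F. inner f (X g) *\<^sub>R g)"
  have S_nonneg: "0 \<le> S"
    unfolding S_def by (simp add: sum_nonneg)
  have "S = inner f (X h)"
    unfolding S_def h_def
    by (simp add: linear_sum[OF X(1)] linear_scale[OF X(1)] inner_sum_right power2_eq_square)
  also have "\<dots> \<le> norm f * (L * norm h)"
    by (rule order_trans[OF norm_cauchy_schwarz mult_left_mono[OF X(2)]]) simp
  finally have "S * S \<le> (norm f)\<^sup>2 * L\<^sup>2 * (norm h)\<^sup>2"
    using S_nonneg power_mono[of S "norm f * (L * norm h)" 2] by (simp add: power2_eq_square ac_simps)
  also have "\<dots> \<le> (norm f)\<^sup>2 * L\<^sup>2 * (B * S)"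
    using synthesis_norm_le[OF assms(1,2) bessel, of "\<lambda>g. inner f (X g)"]
    by (intro mult_left_mono) (simp_all add: S_def h_def)
  finally show ?thesis
    unfolding S_def[symmetric]
    by (intro le_of_square_le_mult[OF _ S_nonneg]) (use \<open>0 \<le> B\<close> in \<open>simp_all add: ac_simps\<close>)
qed

lemma cmod_cinner_sq: "(cmod (cinner J f y))\<^sup>2 = (inner f y)\<^sup>2 + (inner f (J y))\<^sup>2"
  by (simp add: cinner_def cmod_power2)

lemma norm_complex_structure:
  assumes "complex_structure J"
  shows "norm (J x) = norm x"
  using assms by (simp add: complex_structure_def norm_eq_sqrt_inner)

lemma bounded_linear_complex_structure:
  assumes "complex_structure J"
  shows "bounded_linear J"
proof -
  have "linear J"
    using assms by (simp add: complex_structure_def)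
  then show ?thesis
    by (intro bounded_linear_intro[of _ 1])
      (auto simp: linear_add linear_scale norm_complex_structure[OF assms])
qed

lemma bessel_image:
  fixes F :: "'a::real_inner set"
  assumes J: "complex_structure J" and "finite F" "0 \<le> B"
    and bessel: "\<And>h. (\<Sum>g\<in>F. (cmod (cinner J h g))\<^sup>2) \<le> B * (norm h)\<^sup>2"
    and X: "linear X" "\<And>x. norm (X x) \<le> L * norm x"
  shows "(\<Sum>g\<in>F. (cmod (cinner J f (X g)))\<^sup>2) \<le> 2 * B * L\<^sup>2 * (norm f)\<^sup>2"
proof -
  have real_bessel: "(\<Sum>g\<in>F. (inner h g)\<^sup>2) \<le> B * (norm h)\<^sup>2" for h
    by (rule order_trans[OF sum_mono bessel]) (simp add: cmod_cinner_sq)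
  have JX: "linear (\<lambda>x. J (X x))" "norm (J (X x)) \<le> L * norm x" for x
    using linear_compose[OF X(1) bounded_linear.linear[OF bounded_linear_complex_structure[OF J]]] X(2)
    by (simp_all add: o_def norm_complex_structure[OF J])
  have "(\<Sum>g\<in>F. (cmod (cinner J f (X g)))\<^sup>2)
      = (\<Sum>g\<in>F. (inner f (X g))\<^sup>2) + (\<Sum>g\<in>F. (inner f (J (X g)))\<^sup>2)"
    by (simp add: cmod_cinner_sq sum.distrib)
  also have "\<dots> \<le> B * L\<^sup>2 * (norm f)\<^sup>2 + B * L\<^sup>2 * (norm f)\<^sup>2"
    by (intro add_mono bessel_image_real[OF assms(2,3) real_bessel X]
        bessel_image_real[OF assms(2,3) real_bessel JX])
  finally show ?thesis by simp
qed

lemma cmod_cinner_add_sq_le: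
  assumes "complex_structure J"
  shows "(cmod (cinner J f (x + y)))\<^sup>2 \<le> 2 * (cmod (cinner J f x))\<^sup>2 + 2 * (cmod (cinner J f y))\<^sup>2"
proof -
  have sq: "(p + q)\<^sup>2 \<le> 2 * p\<^sup>2 + 2 * q\<^sup>2" for p q :: real
    using zero_le_power2[of "p - q"] by (simp add: power2_eq_square algebra_simps)
  have "J (x + y) = J x + J y"
    using assms by (simp add: complex_structure_def linear_add)
  then have "(cmod (cinner J f (x + y)))\<^sup>2 = (inner f x + inner f y)\<^sup>2 + (inner f (J x) + inner f (J y))\<^sup>2"
    by (simp add: cmod_cinner_sq inner_add_right)
  also have "\<dots> \<le> (2 * (inner f x)\<^sup>2 + 2 * (inner f y)\<^sup>2) + (2 * (inner f (J x))\<^sup>2 + 2 * (inner f (J y))\<^sup>2)"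
    by (intro add_mono sq)
  finally show ?thesis
    by (simp add: cmod_cinner_sq algebra_simps)
qed

section \<open>Riemann sums and grids\<close>

lemma exp_minus_one_le_mult_exp:
  assumes "0 \<le> (x::real)"
  shows "exp x - 1 \<le> x * exp x"
proof -
  have "(1 - x) * exp x \<le> exp (- x) * exp x"
    using exp_ge_add_one_self[of "- x"] by (intro mult_right_mono) auto
  then show ?thesis
    by (simp add: exp_minus algebra_simps)
qed

lemma le_exp_div_mult_one_minus_exp:
  fixes a d :: real
  assumes "0 < a" "0 \<le> d" "d \<le> 1"
  shows "d \<le> exp a / a * (1 - exp (- a * d))"
proof -
  have "a * d * exp (- a) \<le> a * d * exp (- (a * d))"
    using assms by (intro mult_left_mono) (auto simp: mult_left_le)
  also have "\<dots> \<le> 1 - exp (- (a * d))"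
    using exp_ge_add_one_self[of "a * d"] by (simp add: exp_minus field_simps)
  finally have "a * d \<le> exp a * (1 - exp (- (a * d)))"
    by (simp add: exp_minus field_simps)
  then show ?thesis
    using assms(1) by (simp add: field_simps)
qed

text \<open>Each term is dominated by a telescoping one.\<close>

lemma riemann_sum_exp_le:
  fixes t :: "nat \<Rightarrow> real"
  assumes "0 < a" "0 \<le> t 0" "\<And>j. t j \<le> t (Suc j)" "\<And>j. t (Suc j) - t j \<le> 1"
  shows "(\<Sum>j<N. (t (Suc j) - t j) * exp (- a * t j)) \<le> exp a / a"
proof -
  have "(\<Sum>j<N. (t (Suc j) - t j) * exp (- a * t j))
      \<le> (\<Sum>j<N. exp a / a * (exp (- a * t j) - exp (- a * t (Suc j))))"
  proof (rule sum_mono)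
    fix j
    have "(t (Suc j) - t j) * exp (- a * t j)
        \<le> exp a / a * (1 - exp (- a * (t (Suc j) - t j))) * exp (- a * t j)"
      using le_exp_div_mult_one_minus_exp[of a "t (Suc j) - t j"] assms
      by (intro mult_right_mono) auto
    also have "\<dots> = exp a / a * (exp (- a * t j) - exp (- a * t (Suc j)))"
      by (simp add: algebra_simps exp_add[symmetric])
    finally show "(t (Suc j) - t j) * exp (- a * t j) \<le> \<dots>" .
  qed
  also have "\<dots> = exp a / a * (exp (- a * t 0) - exp (- a * t N))"
    by (subst sum_distrib_left[symmetric]) (simp only: sum_lessThan_telescope'[of "\<lambda>j. exp (- a * t j)"])
  also have "\<dots> \<le> exp a / a"
  proof (rule mult_left_le)
    show "exp (- a * t 0) - exp (- a * t N) \<le> 1"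
    proof -
      have "exp (- a * t 0) \<le> 1"
        using assms(1,2) by simp
      then show ?thesis
        using exp_gt_zero[of "- a * t N"] by linarith
    qed
  qed (use assms(1) in simp)
  finally show ?thesis .
qed

lemma integral_grid_pieces:
  fixes t :: "nat \<Rightarrow> real" and H :: "real \<Rightarrow> real"
  assumes "\<And>j. t j \<le> t (Suc j)" "continuous_on UNIV H"
  shows "(\<Sum>j<N. integral {t j..t (Suc j)} H) = integral {t 0..t N} H"
proof (induction N)
  case (Suc N)
  have "t 0 \<le> t N"
    using assms(1) by (induction N) (auto intro: order_trans)
  then have "integral {t 0..t N} H + integral {t N..t (Suc N)} H = integral {t 0..t (Suc N)} H"
    using assms by (intro Henstock_Kurzweil_Integration.integral_combine
        integrable_continuous_interval[OF continuous_on_subset]) auto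
  with Suc show ?case by simp
qed simp

lemma integral_le_step_sum:
  fixes t :: "nat \<Rightarrow> real" and H :: "real \<Rightarrow> real"
  assumes "\<And>j. t j \<le> t (Suc j)" "continuous_on UNIV H"
    and "\<And>j s. t j \<le> s \<Longrightarrow> s \<le> t (Suc j) \<Longrightarrow> H s \<le> c j"
  shows "integral {t 0..t N} H \<le> (\<Sum>j<N. (t (Suc j) - t j) * c j)"
  unfolding integral_grid_pieces[where t = t and H = H, OF assms(1,2), symmetric]
proof (rule sum_mono)
  fix j
  have "integral {t j..t (Suc j)} H \<le> integral {t j..t (Suc j)} (\<lambda>_. c j)"
    using assms by (intro integral_le integrable_continuous_interval[OF continuous_on_subset]) auto
  then show "integral {t j..t (Suc j)} H \<le> (t (Suc j) - t j) * c j"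
    using assms(1)[of j] by simp
qed

lemma step_sum_le_integral:
  fixes t :: "nat \<Rightarrow> real" and H :: "real \<Rightarrow> real"
  assumes "\<And>j. t j \<le> t (Suc j)" "continuous_on UNIV H"
    and "\<And>j s. t j \<le> s \<Longrightarrow> s \<le> t (Suc j) \<Longrightarrow> c j \<le> H s"
  shows "(\<Sum>j<N. (t (Suc j) - t j) * c j) \<le> integral {t 0..t N} H"
  unfolding integral_grid_pieces[where t = t and H = H, OF assms(1,2), symmetric]
proof (rule sum_mono)
  fix j
  have "integral {t j..t (Suc j)} (\<lambda>_. c j) \<le> integral {t j..t (Suc j)} H"
    using assms by (intro integral_le integrable_continuous_interval[OF continuous_on_subset]) auto
  then show "(t (Suc j) - t j) * c j \<le> integral {t j..t (Suc j)} H"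
    using assms(1)[of j] by simp
qed

lemma nonneg_summable_on_infsum_le:
  fixes f :: "'i \<Rightarrow> real"
  assumes "\<And>x. x \<in> I \<Longrightarrow> 0 \<le> f x" "\<And>F. finite F \<Longrightarrow> F \<subseteq> I \<Longrightarrow> sum f F \<le> b"
  shows "f summable_on I" and "infsum f I \<le> b"
proof -
  show summable: "f summable_on I"
    using assms by (intro nonneg_bdd_above_summable_on bdd_aboveI2) auto
  show "infsum f I \<le> b"
    by (rule infsum_le_finite_sums[OF summable assms(2)])
qed

lemma sum_le_grid_sum:
  fixes \<phi> :: "'a \<times> 'b \<Rightarrow> real" and t :: "nat \<Rightarrow> 'b"
  assumes "finite S" "S \<subseteq> G \<times> range t" "\<And>x. 0 \<le> \<phi> x"
  obtains F N where "finite F" "F \<subseteq> G" "sum \<phi> S \<le> (\<Sum>j<N. \<Sum>g\<in>F. \<phi> (g, t j))"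
proof -
  have "finite (snd ` S)" "snd ` S \<subseteq> range t"
    using assms(1,2) by auto
  then obtain C where C: "finite C" "snd ` S = t ` C"
    using finite_subset_image[of "snd ` S" t UNIV] by blast
  then obtain N where N: "\<forall>n\<in>C. n < N"
    using finite_nat_set_iff_bounded by blast
  define F where "F = fst ` S"
  have "S \<subseteq> F \<times> t ` {..<N}"
    using C N by (force simp: F_def)
  then have "sum \<phi> S \<le> sum \<phi> (F \<times> t ` {..<N})"
    using assms by (intro sum_mono2) (auto simp: F_def)
  also have "\<dots> = (\<Sum>s\<in>t ` {..<N}. \<Sum>g\<in>F. \<phi> (g, s))"
    by (subst sum.swap) (simp add: sum.cartesian_product)
  also have "\<dots> \<le> (\<Sum>j<N. \<Sum>g\<in>F. \<phi> (g, t j))"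
    using sum_image_le[of "{..<N}" "\<lambda>s. \<Sum>g\<in>F. \<phi> (g, s)" t] assms(3)
    by (simp add: sum_nonneg o_def)
  finally show ?thesis
    using that[of F N] assms(1,2) by (force simp: F_def)
qed

lemma grid_sum_le_infsum:
  fixes \<phi> :: "'a \<times> 'b \<Rightarrow> real" and t :: "nat \<Rightarrow> 'b"
  assumes "inj t" "\<phi> summable_on G \<times> range t" "\<And>x. 0 \<le> \<phi> x" "finite F" "F \<subseteq> G"
  shows "(\<Sum>j<N. \<Sum>g\<in>F. \<phi> (g, t j)) \<le> infsum \<phi> (G \<times> range t)"
proof -
  have "(\<Sum>j<N. \<Sum>g\<in>F. \<phi> (g, t j)) = (\<Sum>s\<in>t ` {..<N}. \<Sum>g\<in>F. \<phi> (g, s))"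
    using sum.reindex[of t "{..<N}" "\<lambda>s. \<Sum>g\<in>F. \<phi> (g, s)"] inj_on_subset[OF assms(1)]
    by (simp add: o_def)
  also have "\<dots> = sum \<phi> (F \<times> t ` {..<N})"
    by (subst sum.swap) (simp add: sum.cartesian_product)
  also have "\<dots> \<le> infsum \<phi> (G \<times> range t)"
    using assms by (intro finite_sum_le_infsum) auto
  finally show ?thesis .
qed

lemma filterlim_at_top_of_linear_growth:
  fixes t :: "nat \<Rightarrow> real"
  assumes "0 < \<epsilon>" "\<And>j. \<epsilon> * real j \<le> t j"
  shows "filterlim t at_top sequentially"
  by (rule filterlim_at_top_mono[OF filterlim_tendsto_pos_mult_at_top[OF tendsto_const assms(1)
        filterlim_real_sequentially]]) (use assms(2) in simp)

lemma linear_growth_of_uniformly_separated: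
  fixes t :: "nat \<Rightarrow> real"
  assumes "uniformly_separated (range t)" "t 0 = 0" "\<And>j. t j < t (Suc j)"
  obtains \<epsilon> where "0 < \<epsilon>" "\<And>j. \<epsilon> * real j \<le> t j"
proof -
  obtain \<epsilon> where "0 < \<epsilon>" and sep: "\<forall>x\<in>range t. \<forall>y\<in>range t. x \<noteq> y \<longrightarrow> \<epsilon> \<le> \<bar>x - y\<bar>"
    using assms(1) unfolding uniformly_separated_def by blast
  have step: "\<epsilon> \<le> t (Suc j) - t j" for j
  proof -
    have "\<epsilon> \<le> \<bar>t (Suc j) - t j\<bar>"
      using sep assms(3)[of j] by (metis less_irrefl rangeI)
    then show ?thesis
      using assms(3)[of j] by simp
  qed
  have "\<epsilon> * real j \<le> t j" for j
  proof (induction j)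
    case (Suc j)
    with step[of j] show ?case
      by (simp add: algebra_simps)
  qed (simp add: assms(2))
  with \<open>0 < \<epsilon>\<close> that show ?thesis
    by blast
qed

lemma uniformly_separated_grid:
  assumes "0 < m"
  shows "uniformly_separated (range (\<lambda>j::nat. real j * m))"
  unfolding uniformly_separated_def
proof (intro exI[of _ m] conjI ballI impI assms)
  fix x y assume "x \<in> range (\<lambda>j::nat. real j * m)" "y \<in> range (\<lambda>j::nat. real j * m)" "x \<noteq> y"
  then obtain i j :: nat where "x = real i * m" "y = real j * m" "i \<noteq> j"
    by auto
  then have "1 * m \<le> \<bar>real i - real j\<bar> * m" and "\<bar>x - y\<bar> = \<bar>real i - real j\<bar> * m"
    using assms by (auto intro!: mult_right_mono simp: abs_mult left_diff_distrib[symmetric])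
  then show "m \<le> \<bar>x - y\<bar>"
    by simp
qed

lemma uniform_grid_of_sampling:
  assumes "\<exists>\<delta>>0. \<forall>t :: nat \<Rightarrow> real.
      (uniformly_separated (range t) \<and> t 0 = 0 \<and> (\<forall>j. 0 < t (Suc j) - t j \<and> t (Suc j) - t j < \<delta>))
      \<longrightarrow> P (range t)"
  shows "\<exists>m>0. P (range (\<lambda>j::nat. real j * m))"
proof -
  obtain \<delta> where "0 < \<delta>" and sampling: "\<And>t :: nat \<Rightarrow> real.
      uniformly_separated (range t) \<Longrightarrow> t 0 = 0 \<Longrightarrow> (\<forall>j. 0 < t (Suc j) - t j \<and> t (Suc j) - t j < \<delta>)
      \<Longrightarrow> P (range t)"
    using assms by blast
  have "P (range (\<lambda>j::nat. real j * (\<delta> / 2)))"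
    using \<open>0 < \<delta>\<close> by (intro sampling uniformly_separated_grid) (auto simp: algebra_simps)
  with \<open>0 < \<delta>\<close> show ?thesis
    by (intro exI[of _ "\<delta> / 2"]) simp
qed

section \<open>Frames of orbits\<close>

locale frame_setting = bounded_operator_exp A K
  for A :: "'a::{real_inner, complete_space} \<Rightarrow> 'a" and K :: real +
  fixes J :: "'a \<Rightarrow> 'a" and G :: "'a set" and B M \<omega> :: real
  assumes complex_structure_J: "complex_structure J"
    and bessel_summable: "\<And>f. (\<lambda>g. (cmod (cinner J f g))\<^sup>2) summable_on G"
    and bessel_bound: "\<And>f. (\<Sum>\<^sub>\<infinity>g\<in>G. (cmod (cinner J f g))\<^sup>2) \<le> B * (norm f)\<^sup>2"
    and B_pos: "0 < B" and M_ge_1: "1 \<le> M" and \<omega>_neg: "\<omega> < 0"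
    and stable: "\<And>t. 0 \<le> t \<Longrightarrow> onorm (E t) \<le> M * exp (\<omega> * t)"
begin

definition phi :: "'a \<Rightarrow> 'a \<Rightarrow> real \<Rightarrow> real" where
  "phi f g = (\<lambda>t. (cmod (cinner J f (E t g)))\<^sup>2)"

definition frame_sum :: "real set \<Rightarrow> 'a \<Rightarrow> real" where
  "frame_sum T f = (\<Sum>\<^sub>\<infinity>(g, s)\<in>G \<times> T. phi f g s)"

definition frame_integral :: "'a \<Rightarrow> real" where
  "frame_integral f = (\<Sum>\<^sub>\<infinity>g\<in>G. LINT s:{0..}|lborel. phi f g s)"

lemma norm_op_exp_stable_le:
  assumes "0 \<le> t"
  shows "norm (E t x) \<le> M * exp (\<omega> * t) * norm x"
  using onorm[OF bounded_linear_op_exp, of t x] mult_right_mono[OF stable[OF assms] norm_ge_zero[of x]]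
  by linarith

lemma phi_nonneg: "0 \<le> phi f g t"
  by (simp add: phi_def)

lemma continuous_on_phi: "continuous_on UNIV (phi f g)"
proof -
  have "continuous_on UNIV (\<lambda>t. J (E t g))"
    using continuous_on_compose[OF continuous_on_op_exp
        linear_continuous_on[OF bounded_linear_complex_structure[OF complex_structure_J]]]
    by (simp add: o_def)
  then show ?thesis
    unfolding phi_def cmod_cinner_sq by (intro continuous_intros continuous_on_op_exp)
qed

lemma phi_measurable [measurable]: "phi f g \<in> borel_measurable borel"
  by (rule borel_measurable_continuous_onI[OF continuous_on_phi])

lemma sum_phi_le:
  assumes "0 \<le> t" "finite F" "F \<subseteq> G"
  shows "(\<Sum>g\<in>F. phi f g t) \<le> 2 * B * M\<^sup>2 * exp (2 * \<omega> * t) * (norm f)\<^sup>2"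
proof -
  have "(\<Sum>g\<in>F. (cmod (cinner J h g))\<^sup>2) \<le> B * (norm h)\<^sup>2" for h
    using order_trans[OF finite_sum_le_infsum[OF bessel_summable assms(2,3)] bessel_bound] by simp
  then have "(\<Sum>g\<in>F. phi f g t) \<le> 2 * B * (M * exp (\<omega> * t))\<^sup>2 * (norm f)\<^sup>2"
    unfolding phi_def using B_pos
    by (intro bessel_image[OF complex_structure_J assms(2)] linear_op_exp norm_op_exp_stable_le assms(1)) auto
  then show ?thesis
    by (simp add: power_mult_distrib exp_double[symmetric] mult.assoc mult.left_commute)
qed

lemma has_integral_exp_decay: "((\<lambda>s. exp (2 * \<omega> * s)) has_integral 1 / (- 2 * \<omega>)) {0..}"
  using has_integral_exp_minus_to_infinity[of "- 2 * \<omega>" 0] \<omega>_neg by simp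

lemma set_integrable_phi:
  assumes "g \<in> G"
  shows "set_integrable lborel {0..} (phi f g)"
proof -
  have "(\<lambda>s. exp (2 * \<omega> * s)) absolutely_integrable_on {0..}"
    using has_integral_exp_decay by (intro nonnegative_absolutely_integrable_1) auto
  then have "set_integrable lborel {0..} (\<lambda>s. exp (2 * \<omega> * s))"
    unfolding set_integrable_def by (simp add: integrable_completion)
  then have "set_integrable lborel {0..} (\<lambda>s. (2 * B * M\<^sup>2 * (norm f)\<^sup>2) * exp (2 * \<omega> * s))"
    by (rule set_integrable_mult_right)
  then show ?thesis
  proof (rule set_integrable_bound)
    show "set_borel_measurable lborel {0..} (phi f g)"
      unfolding set_borel_measurable_def by measurable
    show "AE s in lborel. s \<in> {0..} \<longrightarrow> norm (phi f g s) \<le> norm (2 * B * M\<^sup>2 * (norm f)\<^sup>2 * exp (2 * \<omega> * s))"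
      using sum_phi_le[of _ "{g}" f] assms phi_nonneg B_pos by (auto simp: ac_simps intro!: AE_I2)
  qed
qed

lemma phi_integrable_on:
  assumes "g \<in> G"
  shows "phi f g integrable_on {0..}" and "(LINT s:{0..}|lborel. phi f g s) = integral {0..} (phi f g)"
  using set_borel_integral_eq_integral[OF set_integrable_phi[OF assms]] by auto

lemma sum_integral_phi_le:
  assumes "finite F" "F \<subseteq> G"
  shows "(\<Sum>g\<in>F. LINT s:{0..}|lborel. phi f g s) \<le> 2 * B * M\<^sup>2 / (- 2 * \<omega>) * (norm f)\<^sup>2"
proof -
  define C where "C = 2 * B * M\<^sup>2 * (norm f)\<^sup>2"
  note majorant = has_integral_mult_left[OF has_integral_exp_decay, of C]
  have "(\<Sum>g\<in>F. LINT s:{0..}|lborel. phi f g s) = integral {0..} (\<lambda>s. \<Sum>g\<in>F. phi f g s)"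
    using assms by (simp add: phi_integrable_on integral_sum subset_iff)
  also have "\<dots> \<le> integral {0..} (\<lambda>s. exp (2 * \<omega> * s) * C)"
    using assms sum_phi_le by (intro integral_le integrable_sum has_integral_integrable[OF majorant])
      (auto simp: phi_integrable_on C_def ac_simps)
  also have "\<dots> = 2 * B * M\<^sup>2 / (- 2 * \<omega>) * (norm f)\<^sup>2"
    using integral_unique[OF majorant] by (simp add: C_def)
  finally show ?thesis .
qed

lemma frame_integral_upper:
  shows "(\<lambda>g. LINT s:{0..}|lborel. phi f g s) summable_on G"
    and "frame_integral f \<le> 2 * B * M\<^sup>2 / (- 2 * \<omega>) * (norm f)\<^sup>2"
proof -
  have "0 \<le> (LINT s:{0..}|lborel. phi f g s)" if "g \<in> G" for g
    using that by (simp add: phi_integrable_on integral_nonneg phi_nonneg)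
  from nonneg_summable_on_infsum_le[OF this sum_integral_phi_le]
  show "(\<lambda>g. LINT s:{0..}|lborel. phi f g s) summable_on G"
    and "frame_integral f \<le> 2 * B * M\<^sup>2 / (- 2 * \<omega>) * (norm f)\<^sup>2"
    unfolding frame_integral_def by auto
qed

lemma frame_sum_upper:
  fixes t :: "nat \<Rightarrow> real"
  assumes "0 < \<epsilon>" "\<And>j. \<epsilon> * real j \<le> t j"
  shows "(\<lambda>(g, s). phi f g s) summable_on G \<times> range t"
    and "frame_sum (range t) f \<le> 2 * B * M\<^sup>2 / (1 - exp (2 * \<omega> * \<epsilon>)) * (norm f)\<^sup>2"
proof -
  define r where "r = exp (2 * \<omega> * \<epsilon>)"
  have r: "0 < r" "r < 1"
    using \<omega>_neg assms(1) by (auto simp: r_def mult_pos_neg mult_neg_pos)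
  have grid_le: "(\<Sum>j<N. \<Sum>g\<in>F. phi f g (t j)) \<le> 2 * B * M\<^sup>2 / (1 - r) * (norm f)\<^sup>2"
    if "finite F" "F \<subseteq> G" for F N
  proof -
    have "(\<Sum>j<N. \<Sum>g\<in>F. phi f g (t j)) \<le> (\<Sum>j<N. 2 * B * M\<^sup>2 * r ^ j * (norm f)\<^sup>2)"
    proof (rule sum_mono)
      fix j
      have "0 \<le> \<epsilon> * real j"
        using assms(1) by simp
      then have "exp (2 * \<omega> * t j) \<le> r ^ j"
        using assms(2)[of j] \<omega>_neg by (simp add: r_def exp_of_nat_mult[symmetric] mult_left_mono_neg ac_simps)
      then have "2 * B * M\<^sup>2 * exp (2 * \<omega> * t j) * (norm f)\<^sup>2 \<le> 2 * B * M\<^sup>2 * r ^ j * (norm f)\<^sup>2"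
        using B_pos by (intro mult_right_mono mult_left_mono) auto
      then show "(\<Sum>g\<in>F. phi f g (t j)) \<le> 2 * B * M\<^sup>2 * r ^ j * (norm f)\<^sup>2"
        by (rule order_trans[OF sum_phi_le[OF order_trans[OF \<open>0 \<le> \<epsilon> * real j\<close> assms(2)] that]])
    qed
    also have "\<dots> = 2 * B * M\<^sup>2 * (norm f)\<^sup>2 * (\<Sum>j<N. r ^ j)"
      unfolding sum_distrib_left by (simp add: ac_simps)
    also have "\<dots> = 2 * B * M\<^sup>2 * (norm f)\<^sup>2 * ((1 - r ^ N) / (1 - r))"
      using r by (simp add: sum_gp_strict)
    also have "\<dots> \<le> 2 * B * M\<^sup>2 * (norm f)\<^sup>2 * (1 / (1 - r))"
      using r B_pos by (intro mult_left_mono divide_right_mono) auto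
    also have "\<dots> = 2 * B * M\<^sup>2 / (1 - r) * (norm f)\<^sup>2"
      by simp
    finally show ?thesis .
  qed
  have finite_le: "sum (\<lambda>(g, s). phi f g s) S \<le> 2 * B * M\<^sup>2 / (1 - r) * (norm f)\<^sup>2"
    if S: "finite S" "S \<subseteq> G \<times> range t" for S
  proof -
    obtain F N where "finite F" "F \<subseteq> G"
      and "sum (\<lambda>(g, s). phi f g s) S \<le> (\<Sum>j<N. \<Sum>g\<in>F. phi f g (t j))"
      by (rule sum_le_grid_sum[OF S, where \<phi> = "\<lambda>(g, s). phi f g s"]) (auto simp: phi_nonneg)
    with grid_le[of F N] show ?thesis
      by linarith
  qed
  have nonneg: "0 \<le> (\<lambda>(g, s). phi f g s) x" for x
    by (simp add: phi_nonneg split: prod.split)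
  note bounded = nonneg_summable_on_infsum_le[of "G \<times> range t" "\<lambda>(g, s). phi f g s", OF nonneg finite_le]
  show "(\<lambda>(g, s). phi f g s) summable_on G \<times> range t"
    by (rule bounded(1))
  show "frame_sum (range t) f \<le> 2 * B * M\<^sup>2 / (1 - exp (2 * \<omega> * \<epsilon>)) * (norm f)\<^sup>2"
    using bounded(2) unfolding frame_sum_def r_def .
qed

lemma integral_phi_tendsto:
  assumes "g \<in> G" "filterlim b at_top sequentially"
  shows "(\<lambda>N. integral {0..b N} (phi f g)) \<longlonglongrightarrow> (LINT s:{0..}|lborel. phi f g s)"
proof -
  have "uniform_limit (UNIV::unit set) (\<lambda>c _. LINT s:{0..c}|lborel. phi f g s)
      (\<lambda>_. LINT s:{0..}|lborel. phi f g s) at_top"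
    by (rule uniform_limit_set_lebesgue_integral_at_top)
      (auto simp: set_integrable_phi[OF assms(1)] phi_nonneg set_borel_measurable_def)
  from tendsto_uniform_limitI[OF this, of "()"]
  have "((\<lambda>c. LINT s:{0..c}|lborel. phi f g s) \<longlongrightarrow> (LINT s:{0..}|lborel. phi f g s)) at_top"
    by simp
  moreover have "(LINT s:{0..c}|lborel. phi f g s) = integral {0..c} (phi f g)" for c
    by (intro set_borel_integral_eq_integral(2) borel_integrable_atLeastAtMost'
        continuous_on_subset[OF continuous_on_phi]) simp
  ultimately show ?thesis
    using filterlim_compose[OF _ assms(2)] by fastforce
qed

text \<open>The semigroup law writes E s - E u as E u (E (s - u) - id), to which the Bessel bound
  applies.\<close>

lemma sum_phi_perturb:
  assumes "0 \<le> u" "finite F" "F \<subseteq> G"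
  shows "(\<Sum>g\<in>F. phi f g s) \<le> 2 * (\<Sum>g\<in>F. phi f g u)
           + 4 * B * M\<^sup>2 * (exp (\<bar>s - u\<bar> * K) - 1)\<^sup>2 * exp (2 * \<omega> * u) * (norm f)\<^sup>2"
proof -
  define D where "D y = E s y - E u y" for y
  define L where "L = M * exp (\<omega> * u) * (exp (\<bar>s - u\<bar> * K) - 1)"
  have D_linear: "linear D"
    unfolding D_def by (intro linear_compose_sub linear_op_exp)
  have D_bound: "norm (D y) \<le> L * norm y" for y
  proof -
    have "D y = E u (E (s - u) y - y)"
      using op_exp_add[of u "s - u" y] linear_diff[OF linear_op_exp[of u]] by (simp add: D_def)
    also have "norm \<dots> \<le> M * exp (\<omega> * u) * ((exp (\<bar>s - u\<bar> * K) - 1) * norm y)"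
      using M_ge_1
      by (intro order_trans[OF norm_op_exp_stable_le[OF assms(1)]] mult_left_mono norm_op_exp_minus_le) auto
    finally show ?thesis
      by (simp add: L_def ac_simps)
  qed
  have "(\<Sum>g\<in>F. phi f g s) \<le> (\<Sum>g\<in>F. 2 * phi f g u + 2 * (cmod (cinner J f (D g)))\<^sup>2)"
    using cmod_cinner_add_sq_le[OF complex_structure_J, of f "E u g" "D g" for g]
    by (intro sum_mono) (simp add: phi_def D_def)
  also have "\<dots> = 2 * (\<Sum>g\<in>F. phi f g u) + 2 * (\<Sum>g\<in>F. (cmod (cinner J f (D g)))\<^sup>2)"
    by (simp add: sum.distrib sum_distrib_left)
  also have "(\<Sum>g\<in>F. (cmod (cinner J f (D g)))\<^sup>2) \<le> 2 * B * L\<^sup>2 * (norm f)\<^sup>2"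
    using order_trans[OF finite_sum_le_infsum[OF bessel_summable assms(2,3)] bessel_bound] B_pos
    by (intro bessel_image[OF complex_structure_J assms(2) _ _ D_linear D_bound]) auto
  also have "L\<^sup>2 = M\<^sup>2 * (exp (\<bar>s - u\<bar> * K) - 1)\<^sup>2 * exp (2 * \<omega> * u)"
    by (simp add: L_def power_mult_distrib exp_double[symmetric] ac_simps)
  finally show ?thesis
    by (simp add: ac_simps)
qed

text \<open>The last factor bounds Riemann sums of e^{2\<omega>t} over grids of mesh at most 1.\<close>

definition grid_error :: "real \<Rightarrow> real" where
  "grid_error d = 4 * B * M\<^sup>2 * (exp (d * K) - 1)\<^sup>2 * (exp (- 2 * \<omega>) / (- 2 * \<omega>))"

lemma sum_phi_near:
  assumes "0 \<le> u" "u \<le> s" "s - u \<le> d" "finite F" "F \<subseteq> G"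
  shows "(\<Sum>g\<in>F. phi f g s) \<le> 2 * (\<Sum>g\<in>F. phi f g u)
           + 4 * B * M\<^sup>2 * (exp (d * K) - 1)\<^sup>2 * exp (2 * \<omega> * u) * (norm f)\<^sup>2"
    and "(\<Sum>g\<in>F. phi f g u) \<le> 2 * (\<Sum>g\<in>F. phi f g s)
           + 4 * B * M\<^sup>2 * (exp (d * K) - 1)\<^sup>2 * exp (2 * \<omega> * u) * (norm f)\<^sup>2"
proof -
  have "(exp (\<bar>s - u\<bar> * K) - 1)\<^sup>2 \<le> (exp (d * K) - 1)\<^sup>2"
    using assms(2,3) K_pos by (intro power_mono) (auto intro: mult_right_mono)
  moreover have "exp (2 * \<omega> * v) \<le> exp (2 * \<omega> * u)" if "u \<le> v" for v
    using that \<omega>_neg by (simp add: mult_left_mono_neg)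
  ultimately have "4 * B * M\<^sup>2 * (exp (\<bar>s - u\<bar> * K) - 1)\<^sup>2 * exp (2 * \<omega> * v) * (norm f)\<^sup>2
      \<le> 4 * B * M\<^sup>2 * (exp (d * K) - 1)\<^sup>2 * exp (2 * \<omega> * u) * (norm f)\<^sup>2" if "u \<le> v" for v
    using that B_pos by (intro mult_right_mono mult_mono mult_left_mono) auto
  then show "(\<Sum>g\<in>F. phi f g s) \<le> 2 * (\<Sum>g\<in>F. phi f g u)
           + 4 * B * M\<^sup>2 * (exp (d * K) - 1)\<^sup>2 * exp (2 * \<omega> * u) * (norm f)\<^sup>2"
    and "(\<Sum>g\<in>F. phi f g u) \<le> 2 * (\<Sum>g\<in>F. phi f g s)
           + 4 * B * M\<^sup>2 * (exp (d * K) - 1)\<^sup>2 * exp (2 * \<omega> * u) * (norm f)\<^sup>2"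
    using sum_phi_perturb[OF assms(1,4,5), of f s] sum_phi_perturb[OF order_trans[OF assms(1,2)] assms(4,5), of f u]
      assms(2) by (smt (verit) abs_minus_commute)+
qed

context
  fixes t :: "nat \<Rightarrow> real" and d :: real
  assumes t_0: "t 0 = 0" and t_mono: "\<And>j. t j \<le> t (Suc j)"
    and t_step: "\<And>j. t (Suc j) - t j \<le> d" and d_le_1: "d \<le> 1"
begin

lemma grid_nonneg: "0 \<le> t j"
  using t_0 t_mono by (induction j) (auto intro: order_trans)

lemma riemann_sum_error_le:
  "(\<Sum>j<N. (t (Suc j) - t j) * (4 * B * M\<^sup>2 * (exp (d * K) - 1)\<^sup>2 * exp (2 * \<omega> * t j) * (norm f)\<^sup>2))
     \<le> grid_error d * (norm f)\<^sup>2"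
proof -
  have "(\<Sum>j<N. (t (Suc j) - t j) * exp (- (- 2 * \<omega>) * t j)) \<le> exp (- 2 * \<omega>) / (- 2 * \<omega>)"
    using \<omega>_neg t_0 t_mono order_trans[OF t_step d_le_1] by (intro riemann_sum_exp_le) auto
  then have "4 * B * M\<^sup>2 * (exp (d * K) - 1)\<^sup>2 * (norm f)\<^sup>2 * (\<Sum>j<N. (t (Suc j) - t j) * exp (2 * \<omega> * t j))
      \<le> 4 * B * M\<^sup>2 * (exp (d * K) - 1)\<^sup>2 * (norm f)\<^sup>2 * (exp (- 2 * \<omega>) / (- 2 * \<omega>))"
    using B_pos by (intro mult_left_mono) auto
  then show ?thesis
    by (simp add: grid_error_def sum_distrib_left ac_simps)
qed

lemma grid_step_le:
  assumes "t j \<le> s" "s \<le> t (Suc j)"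
  shows "s - t j \<le> d"
  using assms t_step[of j] by linarith

lemma integral_le_grid_sum:
  assumes "finite F" "F \<subseteq> G"
  shows "integral {0..t N} (\<lambda>s. \<Sum>g\<in>F. phi f g s)
    \<le> 2 * (\<Sum>j<N. (t (Suc j) - t j) * (\<Sum>g\<in>F. phi f g (t j))) + grid_error d * (norm f)\<^sup>2"
proof -
  define err where "err j = 4 * B * M\<^sup>2 * (exp (d * K) - 1)\<^sup>2 * exp (2 * \<omega> * t j) * (norm f)\<^sup>2" for j
  have "integral {0..t N} (\<lambda>s. \<Sum>g\<in>F. phi f g s)
      \<le> (\<Sum>j<N. (t (Suc j) - t j) * (2 * (\<Sum>g\<in>F. phi f g (t j)) + err j))"
    unfolding t_0[symmetric] err_def
    using sum_phi_near(1)[OF grid_nonneg _ grid_step_le assms]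
    by (intro integral_le_step_sum t_mono continuous_on_sum continuous_on_phi) auto
  also have "\<dots> = 2 * (\<Sum>j<N. (t (Suc j) - t j) * (\<Sum>g\<in>F. phi f g (t j))) + (\<Sum>j<N. (t (Suc j) - t j) * err j)"
    by (simp add: distrib_left sum.distrib sum_distrib_left ac_simps)
  finally show ?thesis
    using riemann_sum_error_le[where N = N and f = f] unfolding err_def by linarith
qed

lemma grid_sum_le_integral:
  assumes "finite F" "F \<subseteq> G"
  shows "(\<Sum>j<N. (t (Suc j) - t j) * (\<Sum>g\<in>F. phi f g (t j)))
    \<le> 2 * integral {0..t N} (\<lambda>s. \<Sum>g\<in>F. phi f g s) + grid_error d * (norm f)\<^sup>2"
proof -
  define err where "err j = 4 * B * M\<^sup>2 * (exp (d * K) - 1)\<^sup>2 * exp (2 * \<omega> * t j) * (norm f)\<^sup>2" for j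
  have "(\<Sum>j<N. (t (Suc j) - t j) * ((\<Sum>g\<in>F. phi f g (t j)) - err j))
      \<le> integral {0..t N} (\<lambda>s. 2 * (\<Sum>g\<in>F. phi f g s))"
    unfolding t_0[symmetric] err_def
    using sum_phi_near(2)[OF grid_nonneg _ grid_step_le assms]
    by (intro step_sum_le_integral t_mono continuous_intros continuous_on_phi) (auto simp: field_simps)
  moreover have "(\<Sum>j<N. (t (Suc j) - t j) * ((\<Sum>g\<in>F. phi f g (t j)) - err j))
      = (\<Sum>j<N. (t (Suc j) - t j) * (\<Sum>g\<in>F. phi f g (t j))) - (\<Sum>j<N. (t (Suc j) - t j) * err j)"
    by (simp add: right_diff_distrib sum_subtractf)
  moreover have "integral {0..t N} (\<lambda>s. 2 * (\<Sum>g\<in>F. phi f g s)) = 2 * integral {0..t N} (\<lambda>s. \<Sum>g\<in>F. phi f g s)"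
    by simp
  ultimately show ?thesis
    using riemann_sum_error_le[where N = N and f = f] unfolding err_def by linarith
qed

end

lemma integral_sum_phi:
  assumes "finite F"
  shows "integral {0..b} (\<lambda>s. \<Sum>g\<in>F. phi f g s) = (\<Sum>g\<in>F. integral {0..b} (phi f g))"
  using assms by (intro integral_sum integrable_continuous_interval[OF continuous_on_subset[OF continuous_on_phi]]) auto

lemma integral_sum_phi_le_frame_integral:
  assumes "finite F" "F \<subseteq> G"
  shows "integral {0..b} (\<lambda>s. \<Sum>g\<in>F. phi f g s) \<le> frame_integral f"
proof -
  have "integral {0..b} (phi f g) \<le> (LINT s:{0..}|lborel. phi f g s)" if "g \<in> G" for g
    unfolding phi_integrable_on(2)[OF that]
    by (intro integral_subset_le integrable_continuous_interval continuous_on_subset[OF continuous_on_phi]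
        phi_integrable_on(1)[OF that]) (auto simp: phi_nonneg)
  then have "integral {0..b} (\<lambda>s. \<Sum>g\<in>F. phi f g s) \<le> (\<Sum>g\<in>F. LINT s:{0..}|lborel. phi f g s)"
    unfolding integral_sum_phi[OF assms(1)] using assms by (intro sum_mono) auto
  also have "\<dots> \<le> frame_integral f"
    unfolding frame_integral_def using assms
    by (intro finite_sum_le_infsum frame_integral_upper(1)) (auto simp: phi_integrable_on integral_nonneg phi_nonneg)
  finally show ?thesis .
qed

lemma frame_integral_le_frame_sum:
  fixes t :: "nat \<Rightarrow> real"
  assumes t_0: "t 0 = 0" and t_step: "\<And>j. 0 < t (Suc j) - t j" "\<And>j. t (Suc j) - t j \<le> d"
    and "d \<le> 1" and growth: "0 < \<epsilon>" "\<And>j. \<epsilon> * real j \<le> t j"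
  shows "frame_integral f \<le> 2 * d * frame_sum (range t) f + grid_error d * (norm f)\<^sup>2"
  unfolding frame_integral_def
proof (rule infsum_le_finite_sums[OF frame_integral_upper(1)])
  fix F assume F: "finite F" "F \<subseteq> G"
  have "(\<lambda>N. integral {0..t N} (\<lambda>s. \<Sum>g\<in>F. phi f g s)) \<longlonglongrightarrow> (\<Sum>g\<in>F. LINT s:{0..}|lborel. phi f g s)"
    unfolding integral_sum_phi[OF F(1)] using F
    by (intro tendsto_sum integral_phi_tendsto filterlim_at_top_of_linear_growth[OF growth]) auto
  moreover have "integral {0..t N} (\<lambda>s. \<Sum>g\<in>F. phi f g s) \<le> 2 * d * frame_sum (range t) f + grid_error d * (norm f)\<^sup>2"
    for N
  proof -
    have "(\<Sum>j<N. (t (Suc j) - t j) * (\<Sum>g\<in>F. phi f g (t j))) \<le> (\<Sum>j<N. d * (\<Sum>g\<in>F. phi f g (t j)))"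
      using t_step by (intro sum_mono mult_right_mono) (auto simp: sum_nonneg phi_nonneg)
    also have "\<dots> = d * (\<Sum>j<N. \<Sum>g\<in>F. phi f g (t j))"
      by (simp add: sum_distrib_left)
    also have "\<dots> \<le> d * frame_sum (range t) f"
    proof (rule mult_left_mono)
      have "inj t"
        using t_step(1) by (intro strict_mono_imp_inj_on) (simp add: strict_mono_Suc_iff)
      then show "(\<Sum>j<N. \<Sum>g\<in>F. phi f g (t j)) \<le> frame_sum (range t) f"
        using grid_sum_le_infsum[where \<phi> = "\<lambda>(g, s). phi f g s", OF _ frame_sum_upper(1)[OF growth] _ F]
        by (simp add: frame_sum_def phi_nonneg split: prod.split)
      show "0 \<le> d"
        using t_step[of 0] by linarith
    qed
    finally have "2 * (\<Sum>j<N. (t (Suc j) - t j) * (\<Sum>g\<in>F. phi f g (t j))) \<le> 2 * d * frame_sum (range t) f"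
      by simp
    moreover have t_mono: "t j \<le> t (Suc j)" for j
      using t_step(1)[of j] by linarith
    ultimately show ?thesis
      using integral_le_grid_sum[OF t_0 t_mono t_step(2) \<open>d \<le> 1\<close> F, where N = N and f = f] by linarith
  qed
  ultimately show "(\<Sum>g\<in>F. LINT s:{0..}|lborel. phi f g s) \<le> 2 * d * frame_sum (range t) f + grid_error d * (norm f)\<^sup>2"
    by (intro LIMSEQ_le_const2) auto
qed

lemma frame_sum_grid_le:
  assumes "0 < h" "h \<le> 1"
  shows "h * frame_sum (range (\<lambda>j. real j * h)) f \<le> 2 * frame_integral f + grid_error h * (norm f)\<^sup>2"
proof -
  define t where "t j = real j * h" for j
  have "frame_sum (range t) f \<le> (2 * frame_integral f + grid_error h * (norm f)\<^sup>2) / h"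
    unfolding frame_sum_def
  proof (rule infsum_le_finite_sums[OF frame_sum_upper(1)[OF assms(1)]])
    fix S assume S: "finite S" "S \<subseteq> G \<times> range t"
    obtain F N where F: "finite F" "F \<subseteq> G"
      and S_le: "sum (\<lambda>(g, s). phi f g s) S \<le> (\<Sum>j<N. \<Sum>g\<in>F. phi f g (t j))"
      by (rule sum_le_grid_sum[OF S, where \<phi> = "\<lambda>(g, s). phi f g s"]) (auto simp: phi_nonneg)
    have "h * (\<Sum>j<N. \<Sum>g\<in>F. phi f g (t j)) \<le> 2 * frame_integral f + grid_error h * (norm f)\<^sup>2"
    proof -
      have "h * (\<Sum>j<N. \<Sum>g\<in>F. phi f g (t j)) = (\<Sum>j<N. (t (Suc j) - t j) * (\<Sum>g\<in>F. phi f g (t j)))"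
        by (simp add: t_def sum_distrib_left algebra_simps)
      also have "\<dots> \<le> 2 * integral {0..t N} (\<lambda>s. \<Sum>g\<in>F. phi f g s) + grid_error h * (norm f)\<^sup>2"
        using assms by (intro grid_sum_le_integral F) (auto simp: t_def algebra_simps)
      also have "\<dots> \<le> 2 * frame_integral f + grid_error h * (norm f)\<^sup>2"
        using integral_sum_phi_le_frame_integral[OF F] by simp
      finally show ?thesis .
    qed
    moreover have "h * sum (\<lambda>(g, s). phi f g s) S \<le> h * (\<Sum>j<N. \<Sum>g\<in>F. phi f g (t j))"
      using S_le assms(1) by (simp add: mult_left_mono)
    ultimately have "h * sum (\<lambda>(g, s). phi f g s) S \<le> 2 * frame_integral f + grid_error h * (norm f)\<^sup>2"
      by linarith
    then show "sum (\<lambda>(g, s). phi f g s) S \<le> (2 * frame_integral f + grid_error h * (norm f)\<^sup>2) / h"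
      using assms(1) by (simp add: pos_le_divide_eq mult.commute)
  qed (simp add: t_def)
  then show ?thesis
    using assms(1) by (simp add: t_def field_simps)
qed

definition grid_error_const :: real where
  "grid_error_const = 4 * B * M\<^sup>2 * (K * exp K)\<^sup>2 * (exp (- 2 * \<omega>) / (- 2 * \<omega>))"

lemma grid_error_const_pos: "0 < grid_error_const"
proof -
  have "0 < exp (- 2 * \<omega>) / (- 2 * \<omega>)"
    using \<omega>_neg by (intro divide_pos_pos) auto
  then show ?thesis
    unfolding grid_error_const_def using B_pos M_ge_1 K_pos by (intro mult_pos_pos) auto
qed

lemma grid_error_le:
  assumes "0 \<le> d" "d \<le> 1"
  shows "grid_error d \<le> grid_error_const * d\<^sup>2"
proof -
  define C where "C = 4 * B * M\<^sup>2 * (exp (- 2 * \<omega>) / (- 2 * \<omega>))"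
  have "exp (d * K) - 1 \<le> d * K * exp (d * K)"
    using assms K_pos by (intro exp_minus_one_le_mult_exp) simp
  also have "\<dots> \<le> d * K * exp K"
    using assms K_pos by (intro mult_left_mono) (auto simp: mult_left_le_one_le)
  finally have "(exp (d * K) - 1)\<^sup>2 \<le> (d * K * exp K)\<^sup>2"
    using assms K_pos by (intro power_mono) simp_all
  moreover have "0 \<le> C"
    unfolding C_def using B_pos \<omega>_neg by (intro mult_nonneg_nonneg divide_nonneg_pos) auto
  ultimately have "C * (exp (d * K) - 1)\<^sup>2 \<le> C * (d * K * exp K)\<^sup>2"
    by (rule mult_left_mono)
  then show ?thesis
    by (simp add: grid_error_def grid_error_const_def C_def power_mult_distrib mult_ac)
qed

lemma frame_sum_mono:
  fixes t t' :: "nat \<Rightarrow> real"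
  assumes "range t \<subseteq> range t'" "0 < \<epsilon>" "\<And>j. \<epsilon> * real j \<le> t j" "0 < \<epsilon>'" "\<And>j. \<epsilon>' * real j \<le> t' j"
  shows "frame_sum (range t) f \<le> frame_sum (range t') f"
  unfolding frame_sum_def using assms(1)
  by (intro infsum_mono2 frame_sum_upper(1)[OF assms(2,3)] frame_sum_upper(1)[OF assms(4,5)])
    (auto simp: phi_nonneg)

lemma semicont_frame_iff:
  "semicont_frame J A G {0..} \<longleftrightarrow> (\<exists>c>0. \<forall>f. c * (norm f)\<^sup>2 \<le> frame_integral f)"
  unfolding semicont_frame_def phi_def[symmetric] frame_integral_def[symmetric]
proof (intro iffI)
  assume "\<exists>c>0. \<exists>C>0. \<forall>f. (\<forall>g\<in>G. set_integrable lborel {0..} (phi f g)) \<and>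
      (\<lambda>g. LINT t:{0..}|lborel. phi f g t) summable_on G \<and>
      c * (norm f)\<^sup>2 \<le> frame_integral f \<and> frame_integral f \<le> C * (norm f)\<^sup>2"
  then show "\<exists>c>0. \<forall>f. c * (norm f)\<^sup>2 \<le> frame_integral f"
    by blast
next
  assume "\<exists>c>0. \<forall>f. c * (norm f)\<^sup>2 \<le> frame_integral f"
  then obtain c where "0 < c" "\<And>f. c * (norm f)\<^sup>2 \<le> frame_integral f"
    by blast
  moreover have "0 < 2 * B * M\<^sup>2 / (- 2 * \<omega>)"
    using B_pos M_ge_1 \<omega>_neg by (intro divide_pos_pos) auto
  ultimately show "\<exists>c>0. \<exists>C>0. \<forall>f. (\<forall>g\<in>G. set_integrable lborel {0..} (phi f g)) \<and>
      (\<lambda>g. LINT t:{0..}|lborel. phi f g t) summable_on G \<and>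
      c * (norm f)\<^sup>2 \<le> frame_integral f \<and> frame_integral f \<le> C * (norm f)\<^sup>2"
    by (intro exI[of _ c] conjI exI[of _ "2 * B * M\<^sup>2 / (- 2 * \<omega>)"] allI ballI)
      (simp_all only: set_integrable_phi frame_integral_upper)
qed

lemma frame_family_iff:
  fixes t :: "nat \<Rightarrow> real"
  assumes "0 < \<epsilon>" "\<And>j. \<epsilon> * real j \<le> t j"
  shows "frame_family J (\<lambda>(g, s). E s g) (G \<times> range t) \<longleftrightarrow>
    (\<exists>c>0. \<forall>f. c * (norm f)\<^sup>2 \<le> frame_sum (range t) f)"
proof -
  have coefficients: "(\<lambda>k. (cmod (cinner J f ((\<lambda>(g, s). E s g) k)))\<^sup>2) = (\<lambda>(g, s). phi f g s)" for f
    by (auto simp: phi_def fun_eq_iff)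
  have "0 < 2 * B * M\<^sup>2"
    using B_pos M_ge_1 by simp
  then have "0 < 2 * B * M\<^sup>2 / (1 - exp (2 * \<omega> * \<epsilon>))"
    using \<omega>_neg assms(1) by (intro divide_pos_pos) (auto simp: mult_neg_pos)
  note upper = frame_sum_upper[OF assms]
  show ?thesis
    unfolding frame_family_def coefficients frame_sum_def[symmetric]
  proof (intro iffI)
    assume "\<exists>c>0. \<exists>C>0. \<forall>f. (\<lambda>(g, s). phi f g s) summable_on G \<times> range t \<and>
      c * (norm f)\<^sup>2 \<le> frame_sum (range t) f \<and> frame_sum (range t) f \<le> C * (norm f)\<^sup>2"
    then show "\<exists>c>0. \<forall>f. c * (norm f)\<^sup>2 \<le> frame_sum (range t) f"
      by blast
  next
    assume "\<exists>c>0. \<forall>f. c * (norm f)\<^sup>2 \<le> frame_sum (range t) f"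
    then obtain c where "0 < c" "\<And>f. c * (norm f)\<^sup>2 \<le> frame_sum (range t) f"
      by blast
    with \<open>0 < 2 * B * M\<^sup>2 / (1 - exp (2 * \<omega> * \<epsilon>))\<close>
    show "\<exists>c>0. \<exists>C>0. \<forall>f. (\<lambda>(g, s). phi f g s) summable_on G \<times> range t \<and>
      c * (norm f)\<^sup>2 \<le> frame_sum (range t) f \<and> frame_sum (range t) f \<le> C * (norm f)\<^sup>2"
      by (intro exI[of _ c] conjI exI[of _ "2 * B * M\<^sup>2 / (1 - exp (2 * \<omega> * \<epsilon>))"] allI)
        (simp_all only: upper)
  qed
qed

lemma sampling_frame_of_semicont_frame:
  assumes "semicont_frame J A G {0..}"
  shows "\<exists>\<delta>>0. \<forall>t :: nat \<Rightarrow> real.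
      (uniformly_separated (range t) \<and> t 0 = 0 \<and> (\<forall>j. 0 < t (Suc j) - t j \<and> t (Suc j) - t j < \<delta>))
      \<longrightarrow> frame_family J (\<lambda>(g, s). E s g) (G \<times> range t)"
proof -
  obtain c where "0 < c" and lower: "\<And>f. c * (norm f)\<^sup>2 \<le> frame_integral f"
    using assms semicont_frame_iff by blast
  define \<delta> where "\<delta> = min 1 (c / (2 * grid_error_const))"
  have \<delta>: "0 < \<delta>" "\<delta> \<le> 1"
    using \<open>0 < c\<close> grid_error_const_pos by (simp_all add: \<delta>_def)
  have "grid_error \<delta> \<le> grid_error_const * \<delta> * \<delta>"
    using grid_error_le[of \<delta>] \<delta> by (simp add: power2_eq_square mult.assoc)
  also have "\<dots> \<le> grid_error_const * (c / (2 * grid_error_const)) * 1"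
  proof (intro mult_mono mult_left_mono)
    show "\<delta> \<le> c / (2 * grid_error_const)"
      by (simp add: \<delta>_def)
  qed (use \<delta> grid_error_const_pos \<open>0 < c\<close> in auto)
  also have "\<dots> = c / 2"
    using grid_error_const_pos by simp
  finally have "grid_error \<delta> \<le> c / 2" .
  show ?thesis
  proof (intro exI[of _ \<delta>] conjI allI impI \<open>0 < \<delta>\<close>)
    fix t :: "nat \<Rightarrow> real"
    assume "uniformly_separated (range t) \<and> t 0 = 0 \<and> (\<forall>j. 0 < t (Suc j) - t j \<and> t (Suc j) - t j < \<delta>)"
    then have sep: "uniformly_separated (range t)" and t_0: "t 0 = 0"
      and step: "\<And>j. 0 < t (Suc j) - t j" "\<And>j. t (Suc j) - t j < \<delta>"
      by blast+
    have "t j < t (Suc j)" for j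
      using step(1)[of j] by simp
    then obtain \<epsilon> where growth: "0 < \<epsilon>" "\<And>j. \<epsilon> * real j \<le> t j"
      using linear_growth_of_uniformly_separated[OF sep t_0] by blast
    have "c / 2 / (2 * \<delta>) * (norm f)\<^sup>2 \<le> frame_sum (range t) f" for f
    proof -
      have "c * (norm f)\<^sup>2 \<le> 2 * \<delta> * frame_sum (range t) f + grid_error \<delta> * (norm f)\<^sup>2"
        using order_trans[OF lower frame_integral_le_frame_sum[OF t_0 step(1) less_imp_le[OF step(2)] \<delta>(2) growth]] .
      moreover have "grid_error \<delta> * (norm f)\<^sup>2 \<le> c / 2 * (norm f)\<^sup>2"
        using \<open>grid_error \<delta> \<le> c / 2\<close> by (rule mult_right_mono) simp
      ultimately have "c / 2 * (norm f)\<^sup>2 \<le> 2 * \<delta> * frame_sum (range t) f"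
        by linarith
      then have "c / 2 * (norm f)\<^sup>2 / (2 * \<delta>) \<le> 2 * \<delta> * frame_sum (range t) f / (2 * \<delta>)"
        by (rule divide_right_mono) (use \<delta> in simp)
      with \<delta>(1) show ?thesis
        by simp
    qed
    moreover have "0 < c / 2 / (2 * \<delta>)"
      using \<open>0 < c\<close> \<delta>(1) by simp
    ultimately show "frame_family J (\<lambda>(g, s). E s g) (G \<times> range t)"
      unfolding frame_family_iff[OF growth] by blast
  qed
qed

lemma semicont_frame_of_grid_frame:
  assumes "0 < m" "frame_family J (\<lambda>(g, s). E s g) (G \<times> range (\<lambda>j::nat. real j * m))"
  shows "semicont_frame J A G {0..}"
proof -
  obtain c where "0 < c" and lower: "\<And>f. c * (norm f)\<^sup>2 \<le> frame_sum (range (\<lambda>j. real j * m)) f"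
    using assms(2) frame_family_iff[of m] assms(1) by auto
  \<comment> \<open>Refine the grid to mesh h = m / k, fine enough for the discretisation error to be absorbed.\<close>
  define k :: nat where "k = nat \<lceil>m + 2 * grid_error_const * m / c\<rceil> + 1"
  define h where "h = m / real k"
  have "m + 2 * grid_error_const * m / c \<le> of_int \<lceil>m + 2 * grid_error_const * m / c\<rceil>"
    by (rule le_of_int_ceiling)
  moreover have "0 \<le> 2 * grid_error_const * m / c"
    using grid_error_const_pos \<open>0 < c\<close> assms(1) by simp
  ultimately have k: "m \<le> real k" "2 * grid_error_const * m / c \<le> real k" "0 < real k"
    unfolding k_def using assms(1) by linarith+
  have h: "0 < h" "h \<le> 1"
    using k assms(1) by (auto simp: h_def)
  have "grid_error_const * h \<le> c / 2"
    using k(2,3) \<open>0 < c\<close> by (simp add: h_def field_simps)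
  have "range (\<lambda>j. real j * m) \<subseteq> range (\<lambda>j. real j * h)"
  proof
    fix x assume "x \<in> range (\<lambda>j. real j * m)"
    then obtain j where "x = real j * m" by blast
    then have "x = real (j * k) * h"
      using k(3) by (simp add: h_def)
    then show "x \<in> range (\<lambda>j. real j * h)" by blast
  qed
  then have refine: "frame_sum (range (\<lambda>j. real j * m)) f \<le> frame_sum (range (\<lambda>j. real j * h)) f" for f
    using assms(1) h(1) by (intro frame_sum_mono[where \<epsilon> = m and \<epsilon>' = h]) auto
  have "grid_error h \<le> grid_error_const * h * h"
    using grid_error_le[of h] h by (simp add: power2_eq_square mult.assoc)
  also have "\<dots> \<le> c / 2 * h"
    using \<open>grid_error_const * h \<le> c / 2\<close> h by (intro mult_right_mono) auto
  finally have "grid_error h \<le> h * (c / 2)"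
    by (simp add: mult.commute)
  have "h * c / 4 * (norm f)\<^sup>2 \<le> frame_integral f" for f
  proof -
    have "h * (c * (norm f)\<^sup>2) \<le> h * frame_sum (range (\<lambda>j. real j * h)) f"
      using mult_left_mono[OF order_trans[OF lower refine], of h] h(1) by simp
    also have "\<dots> \<le> 2 * frame_integral f + grid_error h * (norm f)\<^sup>2"
      by (rule frame_sum_grid_le[OF h(1,2)])
    finally have "h * c * (norm f)\<^sup>2 \<le> 2 * frame_integral f + grid_error h * (norm f)\<^sup>2"
      by (simp add: mult.assoc)
    moreover have "grid_error h * (norm f)\<^sup>2 \<le> h * c * (norm f)\<^sup>2 / 2"
      using mult_right_mono[OF \<open>grid_error h \<le> h * (c / 2)\<close>, of "(norm f)\<^sup>2"] by simp
    ultimately show ?thesis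
      by simp
  qed
  with h(1) \<open>0 < c\<close> show ?thesis
    unfolding semicont_frame_iff by (intro exI[of _ "h * c / 4"]) simp
qed

end

theorem mainTheorem2:
  fixes J :: "'a::{real_inner, complete_space} \<Rightarrow> 'a"
    and A :: "'a \<Rightarrow> 'a"
    and G :: "'a set"
  assumes "complex_structure J"
    and "separable_space TYPE('a)"
    and "bounded_clinear_op J A"
    and "countable G"
    and "bessel_family J (\<lambda>g. g) G"
    and "exp_stable A"
  shows "(semicont_frame J A G {0..} \<longleftrightarrow>
          (\<exists>\<delta>>0. \<forall>t :: nat \<Rightarrow> real.
              (uniformly_separated (range t) \<and> t 0 = 0 \<and>
               (\<forall>j. 0 < t (Suc j) - t j \<and> t (Suc j) - t j < \<delta>))
              \<longrightarrow> frame_family J (\<lambda>(g, s). op_exp s A g) (G \<times> range t))) \<and>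
         (semicont_frame J A G {0..} \<longleftrightarrow>
          (\<exists>m>0. frame_family J (\<lambda>(g, s). op_exp s A g) (G \<times> range (\<lambda>j::nat. real j * m))))"
proof -
  have "bounded_linear A"
    using assms(3) by (simp add: bounded_clinear_op_def)
  moreover obtain K where "0 < K" "\<And>x. norm (A x) \<le> norm x * K"
    using bounded_linear.pos_bounded[OF \<open>bounded_linear A\<close>] by blast
  moreover obtain B where "0 < B" "\<And>f. (\<lambda>g. (cmod (cinner J f g))\<^sup>2) summable_on G \<and>
      (\<Sum>\<^sub>\<infinity>g\<in>G. (cmod (cinner J f g))\<^sup>2) \<le> B * (norm f)\<^sup>2"
    using assms(5) unfolding bessel_family_def by blast
  moreover obtain M \<omega> where "1 \<le> M" "\<omega> < 0" "\<And>t. 0 \<le> t \<Longrightarrow> onorm (op_exp t A) \<le> M * exp (\<omega> * t)"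
    using assms(6) unfolding exp_stable_def by blast
  ultimately interpret frame_setting A K J G B M \<omega>
    using assms(1) by (intro frame_setting.intro bounded_operator_exp.intro frame_setting_axioms.intro)
      (auto simp: mult.commute)
  show ?thesis
    using sampling_frame_of_semicont_frame semicont_frame_of_grid_frame
      uniform_grid_of_sampling[of "\<lambda>T. frame_family J (\<lambda>(g, s). op_exp s A g) (G \<times> T)"]
    by blast
qed

end
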